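(* Let $\mathbf a=(a_1,\dots,a_q)$ be a graceful permutation of length $q$. Suppose $\mathbf a$ has two adjacent entries $x$ and $y$ (in either order) with $x<y<2(y-x)$, and put $p=2(y-x)$. Then there is a graceful permutation of length $2p+q$ with first element $a_1+p$ and last element $a_q+p$.
   Context: A graceful permutation of length $n$ is an arrangement $(a_1,\dots,a_n)$ of the integers $\{0,1,\dots,n-1\}$ whose absolute differences $|a_{i+1}-a_i|$ ($1\le i\le n-1$) are exactly $\{1,\dots,n-1\}$. *)

theory Defs
  imports Main
begin

text \<open>Lists are 0-indexed, so entry a_(i+1) is xs ! i.\<close>

definition graceful :: "nat list \<Rightarrow> bool" where
  "graceful xs \<longleftrightarrow>
     distinct xs \<and> set xs = {0..<length xs} \<and>
     {nat \<bar>int (xs ! (i+1)) - int (xs ! i)\<bar> | i. i + 1 < length xs} = {1..<length xs}"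

end

theory Submission
  imports Defs
begin

text \<open>Call a graceful permutation of length 2P alpha-graceful if consecutive entries lie
  on opposite sides of P and its last entry exceeds its first by P (a Rosa alpha-labelling
  of the path, with a condition on its ends). Insert such a block ys with hd ys = y and
  p = 2(y - x) between the adjacent entries x < y of a, after shifting a up by p and lifting
  the upper half of ys by q = length a: the differences 1, ..., 2p - 1 of ys become
  q + 1, ..., q + 2p - 1, and the two new junctions contribute p + x - y = y - x (the
  difference of the broken edge) and q. Alpha-graceful lists starting at any s < P exist by
  induction on P: for P <= 2s a zigzag through the middle values followed by a lifted
  alpha-graceful list of length 2s starting at 2s - P; for P = 2s + 1 two zigzags; for
  P > 2s + 1 the reflection v |-> 2P - 1 - v, reversed, of the list starting at P - 1 - s.\<close>

definition absdiff :: "nat \<Rightarrow> nat \<Rightarrow> nat" where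
  "absdiff u v = (if u \<le> v then v - u else u - v)"

fun diffs :: "nat list \<Rightarrow> nat set" where
  "diffs (u # v # xs) = insert (absdiff u v) (diffs (v # xs))"
| "diffs _ = {}"

lemma absdiff_commute: "absdiff u v = absdiff v u"
  by (simp add: absdiff_def)

lemma diffs_conv_nth: "diffs xs = (\<lambda>i. absdiff (xs ! i) (xs ! Suc i)) ` {..<length xs - 1}"
  by (induction xs rule: diffs.induct) (auto simp: lessThan_Suc_eq_insert_0 image_image)

lemma absdiff_eq_nat_abs: "absdiff u v = nat \<bar>int v - int u\<bar>"
  by (simp add: absdiff_def nat_diff_distrib')

lemma graceful_iff: "graceful xs \<longleftrightarrow> set xs = {0..<length xs} \<and> diffs xs = {1..<length xs}"
proof -
  have "{nat \<bar>int (xs ! (i+1)) - int (xs ! i)\<bar> | i. i + 1 < length xs} = diffs xs"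
    unfolding diffs_conv_nth absdiff_eq_nat_abs by fastforce
  moreover have "set xs = {0..<length xs} \<Longrightarrow> distinct xs"
    by (simp add: card_distinct)
  ultimately show ?thesis
    unfolding graceful_def by blast
qed

lemma diffs_Cons:
  "diffs (u # xs) = (if xs = [] then {} else insert (absdiff u (hd xs)) (diffs xs))"
  by (cases xs) auto

lemma diffs_append:
  "diffs (xs @ ys) =
     diffs xs \<union> diffs ys \<union> (if xs = [] \<or> ys = [] then {} else {absdiff (last xs) (hd ys)})"
  by (induction xs rule: diffs.induct) (auto simp: diffs_Cons)

lemma diffs_rev [simp]: "diffs (rev xs) = diffs xs"
  by (induction xs rule: diffs.induct) (auto simp: diffs_append absdiff_commute hd_rev)

lemma graceful_rev [simp]: "graceful (rev xs) \<longleftrightarrow> graceful xs"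
  by (simp add: graceful_iff)

lemma diffs_map_add: "diffs (map (\<lambda>v. v + c) xs) = diffs xs"
  by (induction xs rule: diffs.induct) (auto simp: absdiff_def)

lemma image_reflect_atLeastLessThan:
  fixes c :: nat
  assumes "b \<le> Suc c"
  shows "(\<lambda>v. c - v) ` {a..<b} = {Suc c - b..<Suc c - a}"
proof
  show "{Suc c - b..<Suc c - a} \<subseteq> (\<lambda>v. c - v) ` {a..<b}"
  proof
    fix w
    assume "w \<in> {Suc c - b..<Suc c - a}"
    then have "c - w \<in> {a..<b}" and "w = c - (c - w)"
      using assms by auto
    then show "w \<in> (\<lambda>v. c - v) ` {a..<b}"
      by (rule rev_image_eqI)
  qed
qed (use assms in auto)

lemma diffs_map_reflect: "set xs \<subseteq> {..c} \<Longrightarrow> diffs (map (\<lambda>v. c - v) xs) = diffs xs"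
  by (induction xs rule: diffs.induct) (auto simp: absdiff_def)

lemma diffs_splice:
  assumes "i + 1 < length xs" "ys \<noteq> []"
    and "absdiff (xs ! i) (hd ys) = absdiff (xs ! i) (xs ! (i+1))"
  shows "diffs (take (i+1) xs @ ys @ drop (i+1) xs)
    = diffs xs \<union> diffs ys \<union> {absdiff (last ys) (xs ! (i+1))}"
proof -
  have ends: "last (take (i+1) xs) = xs ! i" "hd (drop (i+1) xs) = xs ! (i+1)"
    using assms(1) by (simp_all add: take_Suc_conv_app_nth hd_drop_conv_nth)
  have "diffs xs = diffs (take (i+1) xs) \<union> diffs (drop (i+1) xs) \<union> {absdiff (xs ! i) (xs ! (i+1))}"
    using diffs_append[of "take (i+1) xs" "drop (i+1) xs", unfolded append_take_drop_id] assms(1) ends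
    by auto
  then show ?thesis
    using assms ends by (auto simp: diffs_append)
qed

fun alternating :: "nat \<Rightarrow> nat list \<Rightarrow> bool" where
  "alternating T (u # v # xs) \<longleftrightarrow> (u < T) \<noteq> (v < T) \<and> alternating T (v # xs)"
| "alternating T _ \<longleftrightarrow> True"

lemma alternating_Cons:
  "alternating T (u # xs) \<longleftrightarrow> xs = [] \<or> (u < T) \<noteq> (hd xs < T) \<and> alternating T xs"
  by (cases xs) auto

lemma alternating_append:
  "alternating T (xs @ ys) \<longleftrightarrow> alternating T xs \<and> alternating T ys
     \<and> (xs = [] \<or> ys = [] \<or> (last xs < T) \<noteq> (hd ys < T))"
  by (induction xs rule: alternating.induct) (auto simp: alternating_Cons)

lemma alternating_rev [simp]: "alternating T (rev xs) \<longleftrightarrow> alternating T xs"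
  by (induction xs rule: alternating.induct) (auto simp: alternating_append hd_rev)

lemma alternating_map_reflect:
  "alternating T xs \<Longrightarrow> set xs \<subseteq> {..c} \<Longrightarrow> T \<le> c + 1
    \<Longrightarrow> alternating (c + 1 - T) (map (\<lambda>v. c - v) xs)"
  by (induction xs rule: alternating.induct) auto

definition shift_from :: "nat \<Rightarrow> nat \<Rightarrow> nat \<Rightarrow> nat" where
  "shift_from T k v = (if v < T then v else v + k)"

lemma diffs_map_shift_from:
  "alternating T xs \<Longrightarrow> diffs (map (shift_from T k) xs) = (\<lambda>d. d + k) ` diffs xs"
  by (induction xs rule: diffs.induct) (auto simp: shift_from_def absdiff_def)

lemma alternating_map_shift_from:
  "alternating T xs \<Longrightarrow> T \<le> T' \<Longrightarrow> T' \<le> T + k \<Longrightarrow> alternating T' (map (shift_from T k) xs)"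
  by (induction xs rule: alternating.induct) (auto simp: shift_from_def)

lemma image_shift_from_atLeastLessThan:
  "T \<le> m \<Longrightarrow> shift_from T k ` {0..<m} = {0..<T} \<union> {T + k..<m + k}"
proof -
  assume "T \<le> m"
  then have "{0..<m} = {0..<T} \<union> {T..<m}"
    by auto
  moreover have "shift_from T k ` {0..<T} = {0..<T}" "shift_from T k ` {T..<m} = {T + k..<m + k}"
    by (auto simp: shift_from_def image_iff intro!: bexI[where x = "_ - k"])
  ultimately show ?thesis
    by (simp add: image_Un)
qed

fun zigzag :: "nat \<Rightarrow> nat \<Rightarrow> nat \<Rightarrow> nat list" where
  "zigzag u v 0 = [u]"
| "zigzag u v (Suc n) = u # v # zigzag (Suc u) (v - 1) n"

lemma zigzag_ne_Nil [simp]: "zigzag u v n \<noteq> []"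
  by (cases n) auto

lemma length_zigzag [simp]: "length (zigzag u v n) = 2 * n + 1"
  by (induction n arbitrary: u v) auto

lemma hd_zigzag [simp]: "hd (zigzag u v n) = u"
  by (cases n) auto

lemma last_zigzag [simp]: "last (zigzag u v n) = u + n"
  by (induction n arbitrary: u v) auto

lemma set_zigzag:
  "u + 2 * n \<le> v \<Longrightarrow> set (zigzag u v n) = {u..<u + n + 1} \<union> {v + 1 - n..<v + 1}"
  by (induction n arbitrary: u v) auto

lemma diffs_zigzag:
  "u + 2 * n \<le> v \<Longrightarrow> diffs (zigzag u v n) = {v + 1 - u - 2 * n..<v + 1 - u}"
  by (induction n arbitrary: u v) (auto simp: diffs_Cons absdiff_def)

lemma alternating_zigzag:
  "u + n < T \<Longrightarrow> T + n \<le> v + 1 \<Longrightarrow> alternating T (zigzag u v n)"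
  by (induction n arbitrary: u v) (auto simp: alternating_Cons)

definition alpha_graceful :: "nat \<Rightarrow> nat list \<Rightarrow> bool" where
  "alpha_graceful P xs \<longleftrightarrow>
     graceful xs \<and> length xs = 2 * P \<and> alternating P xs \<and> last xs = hd xs + P"

lemma alpha_graceful_reflect:
  assumes "alpha_graceful P xs" "0 < P"
  defines "ys \<equiv> rev (map (\<lambda>v. 2 * P - 1 - v) xs)"
  shows "alpha_graceful P ys" and "hd ys = P - 1 - hd xs"
proof -
  have len: "length xs = 2 * P" and set_xs: "set xs = {0..<2 * P}"
    and diffs_xs: "diffs xs = {1..<2 * P}" and alt: "alternating P xs"
    and last_xs: "last xs = hd xs + P"
    using assms(1) by (auto simp: alpha_graceful_def graceful_iff)
  have "xs \<noteq> []"
    using len assms(2) by auto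
  then have "hd xs < P"
    using last_xs set_xs by (auto dest!: last_in_set)
  have bound: "set xs \<subseteq> {..2 * P - 1}"
    using set_xs by auto
  have "set ys = {0..<2 * P}"
    using image_reflect_atLeastLessThan[of "2 * P" "2 * P - 1" 0] assms(2)
    by (simp add: ys_def set_xs)
  moreover have "diffs ys = {1..<2 * P}"
    unfolding ys_def diffs_rev diffs_map_reflect[OF bound] diffs_xs ..
  moreover have "alternating P ys"
    using alternating_map_reflect[OF alt bound] assms(2) by (simp add: ys_def)
  moreover have "hd ys = P - 1 - hd xs" "last ys = 2 * P - 1 - hd xs"
    using \<open>xs \<noteq> []\<close> last_xs by (simp_all add: ys_def hd_rev last_rev hd_map last_map)
  ultimately show "alpha_graceful P ys" "hd ys = P - 1 - hd xs"
    using len \<open>hd xs < P\<close> by (auto simp: alpha_graceful_def graceful_iff ys_def)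
qed

lemma alpha_graceful_odd:
  fixes s :: nat
  defines "xs \<equiv> zigzag s (3 * s) s @ map (\<lambda>v. 4 * s + 1 - v) (zigzag 0 (4 * s + 1) s)"
  shows "alpha_graceful (2 * s + 1) xs" and "hd xs = s"
proof -
  let ?L = "zigzag s (3 * s) s" and ?R = "zigzag 0 (4 * s + 1) s"
  have set_R: "set ?R = {0..<s + 1} \<union> {3 * s + 2..<4 * s + 2}"
    by (simp add: set_zigzag)
  then have bound_R: "set ?R \<subseteq> {..4 * s + 1}"
    by auto
  have "set (map (\<lambda>v. 4 * s + 1 - v) ?R) = {3 * s + 1..<4 * s + 2} \<union> {0..<s}"
    unfolding set_map set_R image_Un by (simp add: image_reflect_atLeastLessThan)
  moreover have "set ?L = {s..<3 * s + 1}"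
    by (auto simp: set_zigzag)
  ultimately have "set xs = {0..<4 * s + 2}"
    unfolding xs_def by auto
  moreover have "diffs (map (\<lambda>v. 4 * s + 1 - v) ?R) = {2 * s + 2..<4 * s + 2}"
    unfolding diffs_map_reflect[OF bound_R] by (simp add: diffs_zigzag)
  then have "diffs xs = {1..<4 * s + 2}"
    by (auto simp: xs_def diffs_append diffs_zigzag hd_map absdiff_def)
  moreover have "alternating (2 * s + 1) xs"
    using alternating_map_reflect[OF _ bound_R, of "2 * s + 1"]
    by (auto simp: xs_def alternating_append alternating_zigzag hd_map)
  ultimately show "alpha_graceful (2 * s + 1) xs" "hd xs = s"
    by (auto simp: alpha_graceful_def graceful_iff xs_def last_map)
qed

lemma alpha_graceful_extend:
  assumes ys: "alpha_graceful s ys" "hd ys = 2 * s - P" and P: "s < P" "P \<le> 2 * s"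
  defines "xs \<equiv> zigzag s (2 * P - 1 - s) (P - s - 1) @ P # map (shift_from s (2 * P - 2 * s)) ys"
  shows "alpha_graceful P xs" and "hd xs = s"
proof -
  let ?Z = "zigzag s (2 * P - 1 - s) (P - s - 1)" and ?M = "map (shift_from s (2 * P - 2 * s)) ys"
  have len: "length ys = 2 * s" and set_ys: "set ys = {0..<2 * s}"
    and diffs_ys: "diffs ys = {1..<2 * s}" and alt: "alternating s ys"
    and last_ys: "last ys = 3 * s - P"
    using ys P by (auto simp: alpha_graceful_def graceful_iff)
  have "ys \<noteq> []"
    using len P by auto
  have set_Z: "set ?Z = {s..<P} \<union> {P + 1..<2 * P - s}"
    using P by (auto simp: set_zigzag)
  have diffs_Z: "diffs ?Z = {2..<2 * P - 2 * s}"
    using P by (auto simp: diffs_zigzag)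
  have alt_Z: "alternating P ?Z"
    using P by (simp add: alternating_zigzag)
  have set_M: "set ?M = {0..<s} \<union> {2 * P - s..<2 * P}"
    using P by (simp add: set_ys image_shift_from_atLeastLessThan)
  have diffs_M: "diffs ?M = {2 * P - 2 * s + 1..<2 * P}"
    unfolding diffs_map_shift_from[OF alt] diffs_ys image_add_atLeastLessThan' using P by simp
  have alt_M: "alternating P ?M"
    using P by (simp add: alternating_map_shift_from[OF alt])
  have hd_M: "hd ?M = 2 * s - P" and last_M: "last ?M = P + s"
    using \<open>ys \<noteq> []\<close> ys(2) last_ys P by (simp_all add: hd_map last_map shift_from_def)
  have "length xs = 2 * P"
    using len P by (simp add: xs_def)
  moreover have "set xs = {0..<2 * P}"
    using set_Z set_M P by (auto simp: xs_def)
  moreover have "diffs xs = {1..<2 * P}"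
    using diffs_Z diffs_M hd_M P \<open>ys \<noteq> []\<close>
    by (auto simp: xs_def diffs_append diffs_Cons absdiff_def)
  moreover have "alternating P xs"
    using alt_Z alt_M hd_M P \<open>ys \<noteq> []\<close> by (auto simp: xs_def alternating_append alternating_Cons)
  moreover have "hd xs = s" "last xs = P + s"
    using last_M \<open>ys \<noteq> []\<close> by (simp_all add: xs_def)
  ultimately show "alpha_graceful P xs" "hd xs = s"
    by (auto simp: alpha_graceful_def graceful_iff)
qed

lemma alpha_graceful_exists: "s < P \<Longrightarrow> \<exists>xs. alpha_graceful P xs \<and> hd xs = s"
proof (induction P arbitrary: s rule: less_induct)
  case (less P)
  have extend: "\<exists>xs. alpha_graceful P xs \<and> hd xs = t" if t: "t < P" "P \<le> 2 * t" for t
  proof -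
    have "2 * t - P < t"
      using t by linarith
    then obtain ys where "alpha_graceful t ys" "hd ys = 2 * t - P"
      using less.IH[OF t(1)] by blast
    then show ?thesis
      using alpha_graceful_extend t by blast
  qed
  consider "P \<le> 2 * s" | "P = 2 * s + 1" | "2 * s + 1 < P"
    by linarith
  then show ?case
  proof cases
    case 1
    then show ?thesis
      using extend less.prems by blast
  next
    case 2
    then show ?thesis
      using alpha_graceful_odd by blast
  next
    case 3
    then obtain xs where xs: "alpha_graceful P xs" "hd xs = P - 1 - s"
      using extend[of "P - 1 - s"] by force
    have "P - 1 - (P - 1 - s) = s"
      using 3 by simp
    then show ?thesis
      using alpha_graceful_reflect[OF xs(1)] xs(2) 3 by auto
  qed
qed

lemma graceful_insert_alpha_graceful:
  assumes a: "graceful a" "i + 1 < length a" "a ! i = x" "a ! (i+1) = y" "x < y"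
    and ys: "alpha_graceful p ys" "hd ys = y" and p: "p = 2 * (y - x)"
  defines "b \<equiv> take (i+1) (map (\<lambda>v. v + p) a) @ map (shift_from p (length a)) ys
                @ drop (i+1) (map (\<lambda>v. v + p) a)"
  shows "graceful b \<and> length b = 2 * p + length a \<and> hd b = hd a + p \<and> last b = last a + p"
proof -
  let ?q = "length a" and ?A = "map (\<lambda>v. v + p) a" and ?S = "map (shift_from p (length a)) ys"
  have set_a: "set a = {0..<?q}" and diffs_a: "diffs a = {1..<?q}"
    using a(1) by (auto simp: graceful_iff)
  have len: "length ys = 2 * p" and set_ys: "set ys = {0..<2 * p}"
    and diffs_ys: "diffs ys = {1..<2 * p}" and alt: "alternating p ys" and last_ys: "last ys = y + p"
    using ys by (auto simp: alpha_graceful_def graceful_iff)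
  have "ys \<noteq> []"
    using len p a(5) by auto
  then have "y < p"
    using last_ys set_ys by (auto dest!: last_in_set)
  have "y < ?q"
    using a(2,4) set_a by (metis atLeastLessThan_iff nth_mem)
  have set_S: "set ?S = {0..<p} \<union> {p + ?q..<2 * p + ?q}"
    by (simp add: set_ys image_shift_from_atLeastLessThan)
  have diffs_S: "diffs ?S = {?q + 1..<2 * p + ?q}"
    unfolding diffs_map_shift_from[OF alt] diffs_ys image_add_atLeastLessThan' by simp
  have hd_S: "hd ?S = y" and last_S: "last ?S = y + p + ?q"
    using \<open>ys \<noteq> []\<close> ys(2) last_ys \<open>y < p\<close> by (simp_all add: hd_map last_map shift_from_def)
  have "set b = set ?A \<union> set ?S"
    unfolding b_def by (metis Un_commute Un_left_commute append_take_drop_id set_append)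
  also have "\<dots> = {0..<2 * p + ?q}"
    using set_S by (auto simp: set_a)
  finally have "set b = {0..<2 * p + ?q}" .
  moreover have "diffs b = {1..<2 * p + ?q}"
  proof -
    have "diffs b = diffs ?A \<union> diffs ?S \<union> {absdiff (last ?S) (?A ! (i+1))}"
      unfolding b_def using a p \<open>ys \<noteq> []\<close> hd_S by (intro diffs_splice) (auto simp: absdiff_def)
    also have "\<dots> = {1..<?q} \<union> {?q + 1..<2 * p + ?q} \<union> {?q}"
      using a(2,4) last_S by (simp add: diffs_map_add diffs_a diffs_S absdiff_def)
    also have "\<dots> = {1..<2 * p + ?q}"
      using \<open>y < ?q\<close> a(5) p by auto
    finally show ?thesis .
  qed
  moreover have "length b = 2 * p + ?q"
    using len a(2) by (simp add: b_def)
  moreover have "a \<noteq> []"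
    using a(2) by auto
  then have "hd b = hd a + p" "last b = last a + p"
    using a(2) by (simp_all add: b_def hd_map last_map)
  ultimately show ?thesis
    by (simp add: graceful_iff)
qed

theorem theorem5p6:
  fixes a :: "nat list" and x y i :: nat
  assumes "graceful a"
    and "i + 1 < length a"
    and "(a ! i = x \<and> a ! (i+1) = y) \<or> (a ! i = y \<and> a ! (i+1) = x)"
    and "x < y" and "y < 2 * (y - x)"
  shows "\<exists>b. graceful b \<and> length b = 2 * (2 * (y - x)) + length a
              \<and> hd b = hd a + 2 * (y - x) \<and> last b = last a + 2 * (y - x)"
proof -
  obtain ys where ys: "alpha_graceful (2 * (y - x)) ys" "hd ys = y"
    using alpha_graceful_exists assms(5) by blast
  from assms(3) show ?thesis
  proof
    assume "a ! i = x \<and> a ! (i+1) = y"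
    then show ?thesis
      using graceful_insert_alpha_graceful[OF assms(1,2) _ _ assms(4) ys] by blast
  next
    assume "a ! i = y \<and> a ! (i+1) = x"
    let ?j = "length a - 2 - i"
    have "graceful (rev a)" "?j + 1 < length (rev a)" "rev a ! ?j = x" "rev a ! (?j + 1) = y"
      using assms(1,2) \<open>a ! i = y \<and> a ! (i+1) = x\<close> by (simp_all add: rev_nth Suc_diff_Suc)
    from graceful_insert_alpha_graceful[OF this assms(4) ys refl]
    obtain b where "graceful b" "length b = 2 * (2 * (y - x)) + length a"
      "hd b = last a + 2 * (y - x)" "last b = hd a + 2 * (y - x)"
      using assms(2) by (fastforce simp: hd_rev last_rev)
    then show ?thesis
      by (intro exI[of _ "rev b"]) (simp add: hd_rev last_rev)
  qed
qed

end
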